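(* Let $F$ be a field of characteristic not 2 or 3, and consider the split cube space $V=F^2\otimes F^2\otimes F^2$ with the action of $\tilde M(F)=(GL_2(F)^3)^0\rtimes S_3$. Let $v_0=u_1\otimes u_1\otimes u_1-u_2\otimes u_2\otimes u_2$ (the distinguished cube $(a,e,f,b)=(1,0,0,-1)$). Then \[\mathrm{Stab}_{(GL_2^3)^0}(v_0)=\Big\{\big(\mathrm{diag}(t_1,t_1^{-1}),\mathrm{diag}(t_2,t_2^{-1}),\mathrm{diag}(t_3,t_3^{-1})\big):t_1t_2t_3=1\Big\}\rtimes\{1,(w,w,w)\},\quad w=\begin{pmatrix}0&1\\1&0\end{pmatrix},\] so $\mathrm{Stab}_{M}(v_0)\cong\mathbb G_m^2\rtimes\mathbb Z/2\mathbb Z$, and $\mathrm{Stab}_{\tilde M}(v_0)=\mathrm{Stab}_M(v_0)\rtimes S_3$. This group coincides, as a subgroup of $(GL_2^3)^0\rtimes S_3=GL_2(F^3)^0\rtimes S_3$, with the $F$-automorphism group $\mathrm{Aut}_F(F^3,C_0,Q_0,\beta_0)$ of the split twisted composition algebra.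
   Context: $u_1=(1,0)^T$, $u_2=(0,1)^T$. Cube coordinates $(a,e,f,b)$, $e=(e_1,e_2,e_3)$, $f=(f_1,f_2,f_3)$: $a$ is the coefficient of $u_1^{\otimes3}$, $b$ of $u_2^{\otimes3}$, $e_i$ of the basis vector with $u_2$ in the $i$-th factor and $u_1$ elsewhere, $f_i$ of the basis vector with $u_1$ in the $i$-th factor and $u_2$ elsewhere. $(GL_2^3)^0$ is the group of triples $(g_1,g_2,g_3)$ of invertible $2\times2$ matrices with common determinant $d$; it acts on $V$ by $d^{-1}g_1\otimes g_2\otimes g_3$, and $S_3$ acts by permuting the tensor factors. The split twisted composition algebra $C_0$ is $E^2$ with $E=F^3$, $Q_0(x,y)=xy\in E$, $\beta_0(x,y)=(y^\#,x^\#)$ where $(x_1,x_2,x_3)^\#=(x_2x_3,x_3x_1,x_1x_2)$; its $F$-automorphisms are pairs $(\phi,\sigma)$, $\sigma\in S_3=\mathrm{Aut}(F^3)$, $\phi$ an $F$-linear bijection of $E^2$ with $\phi(av)=\sigma(a)\phi(v)$, $\sigma\circ Q_0=Q_0\circ\phi$, $\phi\circ\beta_0=\beta_0\circ\phi$; writing $\phi$ as an element of $GL_2(E)=GL_2(F)^3$ composed with $\sigma$ acting coordinatewise embeds this group into $GL_2(F^3)\rtimes S_3$. *)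

theory Defs
  imports "HOL-Library.Numeral_Type" "HOL-Combinatorics.Permutations"
begin

(* Basis index of F^2: False = u_1, True = u_2.
   A 2x2 matrix is  m :: bool => bool => 'a,  m i j = entry in row i, column j.
   Tensor factors are indexed by the type 3 = {0,1,2}.
   A cube v in V = F^2 (x) F^2 (x) F^2 is a function  (3 => bool) => 'a :
   v x is the coefficient of u_{x 0} (x) u_{x 1} (x) u_{x 2}.
   A triple (g_1,g_2,g_3) of matrices is  g :: 3 => bool => bool => 'a. *)

type_synonym 'a mat2 = "bool \<Rightarrow> bool \<Rightarrow> 'a"
type_synonym 'a cube = "(3 \<Rightarrow> bool) \<Rightarrow> 'a"

definition det2 :: "'a::comm_ring_1 mat2 \<Rightarrow> 'a" where
  "det2 m = m False False * m True True - m False True * m True False"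

definition mmult2 :: "'a::comm_ring_1 mat2 \<Rightarrow> 'a mat2 \<Rightarrow> 'a mat2" where
  "mmult2 m n = (\<lambda>i j. \<Sum>k\<in>UNIV. m i k * n k j)"

definition diag2 :: "'a::field \<Rightarrow> 'a mat2" where
  "diag2 t = (\<lambda>i j. if i = j then (if i then inverse t else t) else 0)"

definition wmat :: "'a::comm_ring_1 mat2" where
  "wmat = (\<lambda>i j. if i = j then 0 else 1)"

(* (GL_2^3)^0 : triples of invertible matrices with common determinant *)
definition M0 :: "(3 \<Rightarrow> 'a::field mat2) set" where
  "M0 = {g. \<exists>d. d \<noteq> 0 \<and> (\<forall>k. det2 (g k) = d)}"

definition S3 :: "(3 \<Rightarrow> 3) set" where
  "S3 = {\<sigma>. \<sigma> permutes (UNIV :: 3 set)}"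

definition tens_act :: "(3 \<Rightarrow> 'a::field mat2) \<Rightarrow> 'a cube \<Rightarrow> 'a cube" where
  "tens_act g v = (\<lambda>x. inverse (det2 (g 0)) *
      (\<Sum>y\<in>UNIV. (\<Prod>k\<in>UNIV. g k (x k) (y k)) * v y))"

(* S_3 permuting the tensor factors: sigma(v_0 (x) v_1 (x) v_2) = (x)_j v_{sigma^{-1} j} *)
definition perm_act :: "(3 \<Rightarrow> 3) \<Rightarrow> 'a cube \<Rightarrow> 'a cube" where
  "perm_act \<sigma> v = (\<lambda>x. v (x \<circ> \<sigma>))"

definition v0 :: "'a::comm_ring_1 cube" where
  "v0 = (\<lambda>x. if x = (\<lambda>_. False) then 1 else if x = (\<lambda>_. True) then - 1 else 0)"

definition Stab_M :: "(3 \<Rightarrow> 'a::field mat2) set" where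
  "Stab_M = {g \<in> M0. tens_act g v0 = v0}"

(* element (g, sigma) of (GL_2^3)^0 \<rtimes> S_3 acts as g \<circ> sigma *)
definition Stab_Mtilde :: "((3 \<Rightarrow> 'a::field mat2) \<times> (3 \<Rightarrow> 3)) set" where
  "Stab_Mtilde = {(g, \<sigma>). g \<in> M0 \<and> \<sigma> \<in> S3 \<and> tens_act g (perm_act \<sigma> v0) = v0}"

definition Torus :: "(3 \<Rightarrow> 'a::field mat2) set" where
  "Torus = {g. \<exists>t::3 \<Rightarrow> 'a. (\<forall>k. t k \<noteq> 0) \<and> t 0 * t 1 * t 2 = 1 \<and> g = (\<lambda>k. diag2 (t k))}"

type_synonym 'a E = "3 \<Rightarrow> 'a"

definition sharp :: "'a::comm_ring_1 E \<Rightarrow> 'a E" where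
  "sharp x = (\<lambda>k. x (k + 1) * x (k + 2))"

definition Q0 :: "'a::comm_ring_1 E \<times> 'a E \<Rightarrow> 'a E" where
  "Q0 v = (\<lambda>k. fst v k * snd v k)"

definition beta0 :: "'a::comm_ring_1 E \<times> 'a E \<Rightarrow> 'a E \<times> 'a E" where
  "beta0 v = (sharp (snd v), sharp (fst v))"

(* sigma in S_3 = Aut(F^3): e_i \<mapsto> e_{sigma i} *)
definition sigE :: "(3 \<Rightarrow> 3) \<Rightarrow> 'a E \<Rightarrow> 'a E" where
  "sigE \<sigma> a = a \<circ> inv \<sigma>"

definition Esmult :: "'a::comm_ring_1 E \<Rightarrow> 'a E \<times> 'a E \<Rightarrow> 'a E \<times> 'a E" where
  "Esmult a v = ((\<lambda>k. a k * fst v k), (\<lambda>k. a k * snd v k))"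

definition is_autC0 :: "('a::field E \<times> 'a E \<Rightarrow> 'a E \<times> 'a E) \<Rightarrow> (3 \<Rightarrow> 3) \<Rightarrow> bool" where
  "is_autC0 \<phi> \<sigma> \<longleftrightarrow> \<sigma> \<in> S3 \<and> bij \<phi>
     \<and> (\<forall>v w. \<phi> ((\<lambda>k. fst v k + fst w k), (\<lambda>k. snd v k + snd w k))
              = ((\<lambda>k. fst (\<phi> v) k + fst (\<phi> w) k), (\<lambda>k. snd (\<phi> v) k + snd (\<phi> w) k)))
     \<and> (\<forall>c v. \<phi> (Esmult (\<lambda>_. c) v) = Esmult (\<lambda>_. c) (\<phi> v))
     \<and> (\<forall>a v. \<phi> (Esmult a v) = Esmult (sigE \<sigma> a) (\<phi> v))
     \<and> (\<forall>v. sigE \<sigma> (Q0 v) = Q0 (\<phi> v))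
     \<and> (\<forall>v. \<phi> (beta0 v) = beta0 (\<phi> v))"

(* the E-linear map of g = (g_1,g_2,g_3) in GL_2(E) = GL_2(F)^3 on E^2 *)
definition gE :: "(3 \<Rightarrow> 'a::comm_ring_1 mat2) \<Rightarrow> 'a E \<times> 'a E \<Rightarrow> 'a E \<times> 'a E" where
  "gE g v = ((\<lambda>k. g k False False * fst v k + g k False True * snd v k),
             (\<lambda>k. g k True False * fst v k + g k True True * snd v k))"

(* the image of Aut_F(F^3, C_0, Q_0, beta_0) in GL_2(F^3) \<rtimes> S_3 :
   (phi, sigma) \<mapsto> (g, sigma) where phi = g \<circ> (sigma acting coordinatewise) *)
definition AutC0 :: "((3 \<Rightarrow> 'a::field mat2) \<times> (3 \<Rightarrow> 3)) set" where
  "AutC0 = {(g, \<sigma>). (\<forall>k. det2 (g k) \<noteq> 0) \<and>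
       is_autC0 (\<lambda>v. gE g (sigE \<sigma> (fst v), sigE \<sigma> (snd v))) \<sigma>}"

end

theory Submission
  imports Defs
begin

text \<open>
  Every coordinate of \<open>d\<^sup>-\<^sup>1 (g\<^sub>1 \<otimes> g\<^sub>2 \<otimes> g\<^sub>3) v\<^sub>0\<close> is a difference of two triple products
  of matrix entries. At a non-constant index \<open>x\<close> this difference must vanish for both choices of
  the row in one factor, and since that factor is invertible both products of entries taken from the
  other two factors vanish. These vanishing products force \<open>g\<close> to be diagonal as soon as
  \<open>(g\<^sub>1)\<^sub>1\<^sub>1 \<noteq> 0\<close>, and the two constant coordinates then give \<open>d\<^sup>3 = d\<^sup>2\<close>, hence \<open>d = 1\<close>
  and \<open>t\<^sub>1 t\<^sub>2 t\<^sub>3 = 1\<close>. Right multiplication by \<open>w\<close> fixes \<open>v\<^sub>0\<close> and swaps the columns, which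
  reduces the case \<open>(g\<^sub>1)\<^sub>1\<^sub>1 = 0\<close> to the diagonal one. Since \<open>v\<^sub>0\<close> is supported on the two
  constant indices it is fixed by \<open>S\<^sub>3\<close>.

  On the algebra side, \<open>\<sigma> \<in> S\<^sub>3\<close> acting coordinatewise is itself a semilinear automorphism of
  \<open>(C\<^sub>0, Q\<^sub>0, \<beta>\<^sub>0)\<close>, so \<open>g \<circ> \<sigma>\<close> is an automorphism iff \<open>g\<close> preserves \<open>Q\<^sub>0\<close> and commutes with
  \<open>\<beta>\<^sub>0\<close>. Evaluating these identities at the vectors \<open>(1,0)\<close>, \<open>(0,1)\<close>, \<open>(1,1)\<close> again forces the
  diagonal-or-antidiagonal shape with \<open>t\<^sub>1 t\<^sub>2 t\<^sub>3 = 1\<close>, so both groups are the same set.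
\<close>

lemma UNIV_3: "(UNIV :: 3 set) = {0, 1, 2}"
  by (rule sym, rule card_subset_eq) simp_all

lemma forall_3: "(\<forall>k::3. P k) \<longleftrightarrow> P 0 \<and> P 1 \<and> P 2"
  by (metis UNIV_3 UNIV_I insertE singletonD)

lemma numeral_mod_3: "(3::3) = 0" "(4::3) = 1"
  by simp_all

lemma Compl_singleton_3: "- {k :: 3} = {k + 1, k + 2}"
proof -
  have "j \<noteq> k \<longleftrightarrow> j = k + 1 \<or> j = k + 2" for j
  proof -
    have "j \<in> UNIV" "k \<in> UNIV"
      by simp_all
    then show ?thesis
      unfolding UNIV_3 by (elim insertE; simp)
  qed
  then show ?thesis
    by auto
qed

lemma prod_Compl_singleton_3: "(\<Prod>j\<in>-{k}. f j) = f (k + 1) * f (k + 2)"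
  for f :: "3 \<Rightarrow> 'a::comm_monoid_mult"
  by (simp add: Compl_singleton_3)

lemma prod_UNIV_3: "(\<Prod>j\<in>UNIV. f j) = f k * f (k + 1) * f (k + 2)"
  for f :: "3 \<Rightarrow> 'a::comm_monoid_mult"
  by (simp add: prod.remove[of UNIV k] Compl_eq_Diff_UNIV[symmetric] prod_Compl_singleton_3 mult.assoc)

lemma prod_if_eq_const:
  fixes x :: "'i::finite \<Rightarrow> 'b" and f :: "'i \<Rightarrow> 'a::comm_semiring_1"
  shows "(\<Prod>k\<in>UNIV. if x k = c then f k else 0) = (if x = (\<lambda>_. c) then prod f UNIV else 0)"
proof (cases "x = (\<lambda>_. c)")
  case False
  then obtain k where "x k \<noteq> c"
    by auto
  then show ?thesis
    using False by (intro trans[OF prod_zero]) auto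
qed simp

lemma sharp_eq_prod: "sharp x k = (\<Prod>j\<in>-{k}. x j)"
  by (simp add: sharp_def prod_Compl_singleton_3)

lemma sharp_comp_permutes:
  assumes "\<tau> permutes UNIV"
  shows "sharp (x \<circ> \<tau>) = sharp x \<circ> \<tau>"
proof
  fix k
  have "bij \<tau>"
    using assms by (rule permutes_bij)
  then have "bij_betw \<tau> (-{k}) (-{\<tau> k})"
    by (rule bij_betw_subset) (simp_all add: \<open>bij \<tau>\<close> bij_image_Compl_eq)
  then show "sharp (x \<circ> \<tau>) k = (sharp x \<circ> \<tau>) k"
    by (simp add: sharp_eq_prod prod.reindex_bij_betw)
qed

lemma sharp_mult: "sharp (\<lambda>k. a k * x k) = (\<lambda>k. sharp a k * sharp x k)"
  by (simp add: sharp_def fun_eq_iff ac_simps)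

section \<open>The diagonal torus and its translate by w\<close>

lemma det2_diag2 [simp]: "t \<noteq> 0 \<Longrightarrow> det2 (diag2 t) = 1"
  by (simp add: det2_def diag2_def)

definition colswap :: "(3 \<Rightarrow> 'a::comm_ring_1 mat2) \<Rightarrow> 3 \<Rightarrow> 'a mat2" where
  "colswap g = (\<lambda>k. mmult2 (g k) wmat)"

lemma colswap_apply [simp]: "colswap g k i j = g k i (\<not> j)"
  by (cases j) (simp_all add: colswap_def mmult2_def wmat_def UNIV_bool)

lemma colswap_colswap [simp]: "colswap (colswap g) = g"
  by (simp add: fun_eq_iff)

lemma det2_colswap: "det2 (colswap g k) = - det2 (g k)"
  by (simp add: det2_def)

lemma Torus_memI:
  fixes g :: "3 \<Rightarrow> 'a::field mat2"
  assumes "\<And>k. g k False True = 0" and "\<And>k. g k True False = 0"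
    and "\<And>k. g k False False * g k True True = 1"
    and "g 0 False False * g 1 False False * g 2 False False = 1"
  shows "g \<in> Torus"
proof -
  have "g k = diag2 (g k False False)" for k
  proof -
    have "g k True True = inverse (g k False False)"
      using assms(3)[of k] by (rule inverse_unique[symmetric])
    then show ?thesis
      using assms(1,2)[of k] by (auto simp: fun_eq_iff diag2_def)
  qed
  moreover have "g k False False \<noteq> 0" for k
    using assms(3)[of k] by auto
  ultimately show ?thesis
    unfolding Torus_def using assms(4) by (intro CollectI exI[of _ "\<lambda>k. g k False False"]) auto
qed

lemma Torus_det2: "g \<in> Torus \<Longrightarrow> det2 (g k) = 1"
  by (auto simp: Torus_def)

lemma Torus_or_colswap_Torus:
  assumes "P g" and "det2 (g 0) \<noteq> 0"
    and colswap: "\<And>h. P h \<Longrightarrow> P (colswap h)"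
    and diagonal: "\<And>h. P h \<Longrightarrow> h 0 False False \<noteq> 0 \<Longrightarrow> h \<in> Torus"
  shows "g \<in> Torus \<union> colswap ` Torus"
proof (cases "g 0 False False = 0")
  case True
  then have "colswap g 0 False False \<noteq> 0"
    using assms(2) by (simp add: det2_def)
  then have "colswap g \<in> Torus"
    using diagonal colswap assms(1) by blast
  then have "g \<in> colswap ` Torus"
    by (metis colswap_colswap image_eqI)
  then show ?thesis ..
qed (use assms in blast)

section \<open>The stabiliser of v0\<close>

lemma v0_eq: "v0 x = (if x = (\<lambda>_. False) then 1 else 0) - (if x = (\<lambda>_. True) then 1 else 0)"
  by (auto simp: v0_def fun_eq_iff)

lemma v0_nonconst: "x i \<noteq> x j \<Longrightarrow> v0 x = 0"
  by (auto simp: v0_def)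

lemma tens_act_v0:
  "tens_act g v0 x
     = inverse (det2 (g 0)) * ((\<Prod>k\<in>UNIV. g k (x k) False) - (\<Prod>k\<in>UNIV. g k (x k) True))"
  by (simp add: tens_act_def v0_eq right_diff_distrib sum_subtractf if_distrib[of "(*) _"] cong: if_cong)

lemma tens_act_colswap_v0: "tens_act (colswap g) v0 = tens_act g v0"
  by (simp add: fun_eq_iff tens_act_v0 det2_colswap inverse_minus_eq algebra_simps)

lemma colswap_Stab_M: "g \<in> Stab_M \<Longrightarrow> colswap g \<in> Stab_M"
  by (auto simp: Stab_M_def M0_def det2_colswap tens_act_colswap_v0)

lemma Torus_Stab_M:
  assumes "g \<in> Torus"
  shows "g \<in> Stab_M"
proof -
  obtain t where t: "\<And>k. t k \<noteq> 0" "t 0 * t 1 * t 2 = 1" and g: "g = (\<lambda>k. diag2 (t k))"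
    using assms unfolding Torus_def by blast
  have prod_t: "prod t UNIV = 1"
    using t(2) prod_UNIV_3[of t 0] by simp
  have "tens_act g v0 x = v0 x" for x
  proof -
    have "(\<Prod>k\<in>UNIV. g k (x k) False) = (\<Prod>k\<in>UNIV. if x k = False then t k else 0)"
      by (rule prod.cong) (simp_all add: g diag2_def)
    also have "\<dots> = (if x = (\<lambda>_. False) then 1 else 0)"
      by (simp only: prod_if_eq_const prod_t)
    finally have col_False: "(\<Prod>k\<in>UNIV. g k (x k) False) = (if x = (\<lambda>_. False) then 1 else 0)" .
    have "(\<Prod>k\<in>UNIV. g k (x k) True) = (\<Prod>k\<in>UNIV. if x k = True then (inverse \<circ> t) k else 0)"
      by (rule prod.cong) (simp_all add: g diag2_def)
    also have "\<dots> = (if x = (\<lambda>_. True) then 1 else 0)"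
      by (simp only: prod_if_eq_const prod_inversef prod_t inverse_1)
    finally show ?thesis
      using col_False by (simp add: tens_act_v0 v0_eq g t(1))
  qed
  then show ?thesis
    using t(1) by (auto simp: Stab_M_def M0_def g)
qed

lemma det2_kernel:
  fixes m :: "'a::field mat2"
  assumes "det2 m \<noteq> 0" and "\<And>i. m i False * u = m i True * v"
  shows "u = 0 \<and> v = 0"
proof -
  have "det2 m * u = m True True * (m False False * u) - m False True * (m True False * u)"
    by (simp add: det2_def algebra_simps)
  also have "\<dots> = 0"
    by (simp add: assms(2))
  finally have u: "det2 m * u = 0" .
  have "det2 m * v = m False False * (m True True * v) - m True False * (m False True * v)"
    by (simp add: det2_def algebra_simps)
  also have "\<dots> = 0"
    by (simp flip: assms(2))
  finally have "det2 m * v = 0" .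
  with u show ?thesis
    using assms(1) by simp
qed

lemma Stab_M_cube_eq:
  assumes "g \<in> Stab_M"
  obtains d where "d \<noteq> 0" "\<And>k. det2 (g k) = d"
    "\<And>x. (\<Prod>k\<in>UNIV. g k (x k) False) - (\<Prod>k\<in>UNIV. g k (x k) True) = d * v0 x"
proof -
  obtain d where d: "d \<noteq> 0" "\<And>k. det2 (g k) = d" and stab: "tens_act g v0 = v0"
    using assms unfolding Stab_M_def M0_def by blast
  have "(\<Prod>k\<in>UNIV. g k (x k) False) - (\<Prod>k\<in>UNIV. g k (x k) True) = d * v0 x" for x
    using fun_cong[OF stab, of x] d by (simp add: tens_act_v0 field_simps)
  with d show ?thesis
    using that by blast
qed

lemma Stab_M_offdiag_products:
  fixes g :: "3 \<Rightarrow> 'a::field mat2"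
  assumes "g \<in> Stab_M" and "p \<noteq> q"
  shows "g (m + 1) p c * g (m + 2) q c = 0"
proof -
  obtain d where d: "d \<noteq> 0" "\<And>k. det2 (g k) = d"
    and cube: "\<And>x. (\<Prod>k\<in>UNIV. g k (x k) False) - (\<Prod>k\<in>UNIV. g k (x k) True) = d * v0 x"
    using Stab_M_cube_eq[OF assms(1)] by blast
  have "g m i False * (g (m + 1) p False * g (m + 2) q False)
      = g m i True * (g (m + 1) p True * g (m + 2) q True)" for i
  proof -
    define x where "x = (\<lambda>k. if k = m then i else if k = m + 1 then p else q)"
    have "(\<Prod>k\<in>UNIV. g k (x k) c) = g m i c * (g (m + 1) p c * g (m + 2) q c)" for c
      by (simp add: prod_UNIV_3[of _ m] x_def mult.assoc)
    moreover have "v0 x = (0::'a)"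
      using assms(2) by (intro v0_nonconst[of x "m + 1" "m + 2"]) (simp add: x_def)
    ultimately show ?thesis
      using cube[of x] by simp
  qed
  then have "g (m + 1) p False * g (m + 2) q False = 0 \<and> g (m + 1) p True * g (m + 2) q True = 0"
    using d by (intro det2_kernel[of "g m"]) auto
  then show ?thesis
    by (cases c) simp_all
qed

lemma Stab_M_diagonal:
  assumes "g \<in> Stab_M" and "g 0 False False \<noteq> 0"
  shows "g \<in> Torus"
proof -
  obtain d where d: "d \<noteq> 0" "\<And>k. det2 (g k) = d"
    and cube: "\<And>x. (\<Prod>k\<in>UNIV. g k (x k) False) - (\<Prod>k\<in>UNIV. g k (x k) True) = d * v0 x"
    using Stab_M_cube_eq[OF assms(1)] by blast
  have zero01: "g 0 p c * g 1 q c = 0" and zero20: "g 2 p c * g 0 q c = 0" if "p \<noteq> q" for p q c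
    using Stab_M_offdiag_products[OF assms(1) that, of 2 c] Stab_M_offdiag_products[OF assms(1) that, of 1 c]
    by (simp_all add: numeral_mod_3)
  have c12: "g 1 True False = 0" "g 2 True False = 0"
    using zero01[of False True False] zero20[of True False False] assms(2) by simp_all
  then have "g 1 False False \<noteq> 0" "g 1 True True \<noteq> 0" "g 2 True True \<noteq> 0"
    using d(1) d(2)[of 1] d(2)[of 2] by (auto simp: det2_def)
  moreover have c0: "g 0 True False = 0"
    using zero01[of True False False] calculation by simp
  moreover have "g 0 True True \<noteq> 0"
    using d(1) d(2)[of 0] c0 by (auto simp: det2_def)
  ultimately have b012: "g 0 False True = 0" "g 1 False True = 0" "g 2 False True = 0"
    using zero20[of True False True] zero01[of True False True] zero20[of False True True] by simp_all
  have c: "g k True False = 0" for k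
    using c0 c12 forall_3[of "\<lambda>k. g k True False = 0"] by blast
  have b: "g k False True = 0" for k
    using b012 forall_3[of "\<lambda>k. g k False True = 0"] by blast
  have ae: "g k False False * g k True True = d" for k
    using d(2)[of k] by (simp add: det2_def c)
  have prod_a: "g 0 False False * g 1 False False * g 2 False False = d"
    using cube[of "\<lambda>_. False"] by (simp add: prod_UNIV_3[of _ 0] v0_def b)
  have prod_e: "g 0 True True * g 1 True True * g 2 True True = d"
    using cube[of "\<lambda>_. True"] by (simp add: prod_UNIV_3[of _ 0] v0_def c fun_eq_iff)
  have "d * d * d = d * d"
  proof -
    have "d * d * d = (g 0 False False * g 0 True True) * (g 1 False False * g 1 True True)
        * (g 2 False False * g 2 True True)"
      by (simp add: ae)
    also have "\<dots> = (g 0 False False * g 1 False False * g 2 False False)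
        * (g 0 True True * g 1 True True * g 2 True True)"
      by (simp only: mult_ac)
    also have "\<dots> = d * d"
      by (simp only: prod_a prod_e)
    finally show ?thesis .
  qed
  then have "d = 1"
    using d(1) by simp
  then show ?thesis
    using b c ae prod_a by (intro Torus_memI) simp_all
qed

lemma Stab_M_eq: "(Stab_M :: (3 \<Rightarrow> 'a::field mat2) set) = Torus \<union> colswap ` Torus"
  (is "?S = ?T")
proof
  show "?S \<subseteq> ?T"
  proof
    fix g :: "3 \<Rightarrow> 'a mat2"
    assume g: "g \<in> Stab_M"
    then have "det2 (g 0) \<noteq> 0"
      by (auto simp: Stab_M_def M0_def)
    with g show "g \<in> ?T"
      using colswap_Stab_M Stab_M_diagonal by (rule Torus_or_colswap_Torus[where P = "\<lambda>h. h \<in> Stab_M"])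
  qed
  show "?T \<subseteq> ?S"
    using Torus_Stab_M colswap_Stab_M by blast
qed

lemma v0_comp_surj:
  assumes "surj \<sigma>"
  shows "v0 (x \<circ> \<sigma>) = v0 x"
proof -
  have "x \<circ> \<sigma> = (\<lambda>_. c) \<longleftrightarrow> x = (\<lambda>_. c)" for c
  proof
    assume const: "x \<circ> \<sigma> = (\<lambda>_. c)"
    show "x = (\<lambda>_. c)"
    proof
      fix y
      obtain z where "y = \<sigma> z"
        using assms by (metis surjD)
      then show "x y = c"
        using fun_cong[OF const, of z] by simp
    qed
  qed auto
  then show ?thesis
    by (simp add: v0_def)
qed

lemma Stab_Mtilde_eq: "Stab_Mtilde = Stab_M \<times> S3"
proof -
  have perm: "perm_act \<sigma> v0 = v0" if "\<sigma> \<in> S3" for \<sigma>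
    using that by (simp add: S3_def perm_act_def v0_comp_surj permutes_surj)
  show ?thesis
    by (auto simp: Stab_Mtilde_def Stab_M_def perm)
qed

section \<open>Automorphisms of the split twisted composition algebra\<close>

definition sigC :: "(3 \<Rightarrow> 3) \<Rightarrow> 'a E \<times> 'a E \<Rightarrow> 'a E \<times> 'a E" where
  "sigC \<sigma> v = (sigE \<sigma> (fst v), sigE \<sigma> (snd v))"

lemma bij_sigC: "\<sigma> \<in> S3 \<Longrightarrow> bij (sigC \<sigma>)"
  by (rule o_bij[of "sigC (inv \<sigma>)"])
    (auto simp: fun_eq_iff sigC_def sigE_def S3_def permutes_inverses permutes_inv_inv)

lemma sharp_sigE: "\<sigma> \<in> S3 \<Longrightarrow> sharp (sigE \<sigma> x) = sigE \<sigma> (sharp x)"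
  unfolding S3_def sigE_def by (simp add: sharp_comp_permutes permutes_inv)

lemma Q0_sigC: "Q0 (sigC \<sigma> v) = sigE \<sigma> (Q0 v)"
  by (simp add: Q0_def sigC_def sigE_def fun_eq_iff)

lemma beta0_sigC: "\<sigma> \<in> S3 \<Longrightarrow> beta0 (sigC \<sigma> v) = sigC \<sigma> (beta0 v)"
  by (simp add: beta0_def sigC_def sharp_sigE)

definition inv2 :: "'a::field mat2 \<Rightarrow> 'a mat2" where
  "inv2 m = (\<lambda>i j. inverse (det2 m) * (if i = j then m (\<not> i) (\<not> j) else - m i j))"

lemma mmult2_inv2:
  fixes m :: "'a::field mat2"
  assumes "det2 m \<noteq> 0"
  shows "mmult2 (inv2 m) m = (\<lambda>i j. if i = j then 1 else 0)"
    and "mmult2 m (inv2 m) = (\<lambda>i j. if i = j then 1 else 0)"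
proof -
  have "mmult2 (inv2 m) m = (\<lambda>i j. inverse (det2 m) * (if i = j then det2 m else 0))"
    and "mmult2 m (inv2 m) = (\<lambda>i j. inverse (det2 m) * (if i = j then det2 m else 0))"
    by (simp_all add: fun_eq_iff all_bool_eq mmult2_def inv2_def UNIV_bool det2_def algebra_simps)
  then show "mmult2 (inv2 m) m = (\<lambda>i j. if i = j then 1 else 0)"
    and "mmult2 m (inv2 m) = (\<lambda>i j. if i = j then 1 else 0)"
    using assms by (simp_all add: fun_eq_iff)
qed

lemma gE_gE: "gE h (gE g v) = gE (\<lambda>k. mmult2 (h k) (g k)) v"
  by (simp add: gE_def mmult2_def UNIV_bool algebra_simps)

lemma gE_one: "gE (\<lambda>k i j. if i = j then 1 else 0) v = v"
  by (simp add: gE_def)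

lemma bij_gE:
  fixes g :: "3 \<Rightarrow> 'a::field mat2"
  assumes "\<And>k. det2 (g k) \<noteq> 0"
  shows "bij (gE g)"
  by (rule o_bij[of "gE (\<lambda>k. inv2 (g k))"]) (simp_all add: fun_eq_iff gE_gE mmult2_inv2 assms gE_one)

definition gE_preserves_C0 :: "(3 \<Rightarrow> 'a::comm_ring_1 mat2) \<Rightarrow> bool" where
  "gE_preserves_C0 g \<longleftrightarrow> (\<forall>v. Q0 (gE g v) = Q0 v) \<and> (\<forall>v. gE g (beta0 v) = beta0 (gE g v))"

lemma is_autC0_twist_iff:
  assumes \<sigma>: "\<sigma> \<in> S3" and det: "\<And>k. det2 (g k) \<noteq> 0"
  shows "is_autC0 (\<lambda>v. gE g (sigC \<sigma> v)) \<sigma> \<longleftrightarrow> gE_preserves_C0 g"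
proof -
  have surj: "surj (sigC \<sigma>)"
    using bij_sigC[OF \<sigma>] by (rule bij_is_surj)
  have "bij (\<lambda>v. gE g (sigC \<sigma> v))"
    using bij_comp[OF bij_sigC[OF \<sigma>] bij_gE[OF det]] by (simp add: comp_def)
  moreover have "gE g (sigC \<sigma> ((\<lambda>k. fst v k + fst w k), (\<lambda>k. snd v k + snd w k)))
      = ((\<lambda>k. fst (gE g (sigC \<sigma> v)) k + fst (gE g (sigC \<sigma> w)) k),
         (\<lambda>k. snd (gE g (sigC \<sigma> v)) k + snd (gE g (sigC \<sigma> w)) k))" for v w
    by (simp add: gE_def sigC_def sigE_def algebra_simps)
  moreover have smult: "gE g (sigC \<sigma> (Esmult a v)) = Esmult (sigE \<sigma> a) (gE g (sigC \<sigma> v))" for a v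
    by (simp add: gE_def sigC_def sigE_def Esmult_def algebra_simps)
  moreover have "gE g (sigC \<sigma> (Esmult (\<lambda>_. c) v)) = Esmult (\<lambda>_. c) (gE g (sigC \<sigma> v))" for c v
    using smult[of "\<lambda>_. c" v] by (simp add: sigE_def comp_def)
  moreover have "(\<forall>v. sigE \<sigma> (Q0 v) = Q0 (gE g (sigC \<sigma> v))) \<longleftrightarrow> (\<forall>v. Q0 (gE g v) = Q0 v)"
    using surj by (metis Q0_sigC surjD)
  moreover have "(\<forall>v. gE g (sigC \<sigma> (beta0 v)) = beta0 (gE g (sigC \<sigma> v)))
      \<longleftrightarrow> (\<forall>v. gE g (beta0 v) = beta0 (gE g v))"
    using surj by (metis beta0_sigC[OF \<sigma>] surjD)
  ultimately show ?thesis
    unfolding is_autC0_def gE_preserves_C0_def using \<sigma> by blast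
qed

lemma Torus_preserves_C0:
  assumes "g \<in> Torus"
  shows "gE_preserves_C0 g"
proof -
  obtain t where t: "\<And>k. t k \<noteq> 0" "t 0 * t 1 * t 2 = 1" and g: "g = (\<lambda>k. diag2 (t k))"
    using assms unfolding Torus_def by blast
  have gE: "gE g (X, Y) = ((\<lambda>k. t k * X k), (\<lambda>k. inverse (t k) * Y k))" for X Y
    by (simp add: gE_def g diag2_def)
  have "t k * (t (k + 1) * t (k + 2)) = 1" for k
    using prod_UNIV_3[of t k] prod_UNIV_3[of t 0] t(2) by (simp add: mult.assoc)
  then have "inverse (t k) = t (k + 1) * t (k + 2)" for k
    by (rule inverse_unique)
  then have sharp_t: "sharp t = (\<lambda>k. inverse (t k))"
    by (simp add: sharp_def fun_eq_iff)
  have sharp_inverse_t: "sharp (\<lambda>k. inverse (t k)) = t"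
    using sharp_t by (simp add: sharp_def fun_eq_iff flip: inverse_mult_distrib)
  show ?thesis
    unfolding gE_preserves_C0_def
    by (simp add: gE Q0_def beta0_def sharp_mult sharp_t sharp_inverse_t t(1) fun_eq_iff)
qed

lemma gE_colswap: "gE (colswap g) (X, Y) = gE g (Y, X)"
  by (simp add: gE_def add.commute)

lemma colswap_preserves_C0:
  assumes "gE_preserves_C0 g"
  shows "gE_preserves_C0 (colswap g)"
proof -
  have Q: "Q0 (gE g v) = Q0 v" and B: "gE g (beta0 v) = beta0 (gE g v)" for v
    using assms unfolding gE_preserves_C0_def by blast+
  have "Q0 (gE (colswap g) (X, Y)) = Q0 (X, Y)" for X Y
    using Q[of "(Y, X)"] by (simp add: gE_colswap Q0_def mult.commute)
  moreover have "gE (colswap g) (beta0 (X, Y)) = beta0 (gE (colswap g) (X, Y))" for X Y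
    using B[of "(Y, X)"] by (simp add: gE_colswap beta0_def gE_def add.commute)
  ultimately show ?thesis
    unfolding gE_preserves_C0_def by simp
qed

lemma preserves_C0_diagonal:
  fixes g :: "3 \<Rightarrow> 'a::field mat2"
  assumes "gE_preserves_C0 g" and "g 0 False False \<noteq> 0"
  shows "g \<in> Torus"
proof -
  have Q: "Q0 (gE g v) = Q0 v" and B: "gE g (beta0 v) = beta0 (gE g v)" for v
    using assms(1) unfolding gE_preserves_C0_def by blast+
  have beta_units: "beta0 (\<lambda>_. 0, \<lambda>_. 1) = (\<lambda>_. 1, \<lambda>_. 0)" "beta0 (\<lambda>_. 1, \<lambda>_. 0) = (\<lambda>_. 0, \<lambda>_. 1)"
    by (simp_all add: beta0_def sharp_def)
  have FT_TT: "g k False True * g k True True = 0" for k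
    using fun_cong[OF Q[of "(\<lambda>_. 0, \<lambda>_. 1)"], of k] by (simp add: Q0_def gE_def)
  have Q11: "(g k False False + g k False True) * (g k True False + g k True True) = 1" for k
    using fun_cong[OF Q[of "(\<lambda>_. 1, \<lambda>_. 1)"], of k] by (simp add: Q0_def gE_def)
  have beta_FF: "g k False False = g (k + 1) True True * g (k + 2) True True"
    and beta_TF: "g k True False = g (k + 1) False True * g (k + 2) False True" for k
    using B[of "(\<lambda>_. 0, \<lambda>_. 1)"] by (simp_all add: beta_units gE_def beta0_def sharp_def fun_eq_iff)
  have beta_TT: "g k True True = g (k + 1) False False * g (k + 2) False False" for k
    using B[of "(\<lambda>_. 1, \<lambda>_. 0)"] by (simp add: beta_units gE_def beta0_def sharp_def fun_eq_iff)
  have "g 1 True True \<noteq> 0" "g 2 True True \<noteq> 0"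
    using beta_FF[of 0] assms(2) by auto
  then have b12: "g 1 False True = 0" "g 2 False True = 0"
    using FT_TT[of 1] FT_TT[of 2] by simp_all
  then have "g 0 True False = 0"
    using beta_TF[of 0] by simp
  then have "g 0 True True \<noteq> 0"
    using Q11[of 0] by auto
  then have "g 0 False True = 0"
    using FT_TT[of 0] by simp
  with b12 have b: "g k False True = 0" for k
    using forall_3[of "\<lambda>k. g k False True = 0"] by blast
  then have c: "g k True False = 0" for k
    using beta_TF by simp
  have ae: "g k False False * g k True True = 1" for k
    using Q11[of k] by (simp add: b c)
  have "g 0 False False * g 1 False False * g 2 False False = g 0 False False * g 0 True True"
    using beta_TT[of 0] by (simp add: mult.assoc)
  then show ?thesis
    using b c ae by (intro Torus_memI) simp_all
qed

lemma mem_AutC0_iff: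
  "(g, \<sigma>) \<in> AutC0 \<longleftrightarrow> (\<forall>k. det2 (g k) \<noteq> 0) \<and> is_autC0 (\<lambda>v. gE g (sigC \<sigma> v)) \<sigma>"
  by (simp add: AutC0_def sigC_def)

lemma AutC0_eq: "(AutC0 :: ((3 \<Rightarrow> 'a::field mat2) \<times> (3 \<Rightarrow> 3)) set) = (Torus \<union> colswap ` Torus) \<times> S3"
proof -
  have "(g, \<sigma>) \<in> AutC0 \<longleftrightarrow> g \<in> Torus \<union> colswap ` Torus \<and> \<sigma> \<in> S3" for g :: "3 \<Rightarrow> 'a mat2" and \<sigma>
  proof
    assume "(g, \<sigma>) \<in> AutC0"
    then have det: "\<And>k. det2 (g k) \<noteq> 0" and aut: "is_autC0 (\<lambda>v. gE g (sigC \<sigma> v)) \<sigma>"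
      by (simp_all add: mem_AutC0_iff)
    then have \<sigma>: "\<sigma> \<in> S3"
      by (simp add: is_autC0_def)
    with aut det have "gE_preserves_C0 g"
      using is_autC0_twist_iff by blast
    then have "g \<in> Torus \<union> colswap ` Torus"
      using det[of 0] colswap_preserves_C0 preserves_C0_diagonal
      by (rule Torus_or_colswap_Torus[where P = gE_preserves_C0])
    with \<sigma> show "g \<in> Torus \<union> colswap ` Torus \<and> \<sigma> \<in> S3"
      by simp
  next
    assume g\<sigma>: "g \<in> Torus \<union> colswap ` Torus \<and> \<sigma> \<in> S3"
    then have "gE_preserves_C0 g" and det: "\<And>k. det2 (g k) \<noteq> 0"
      using Torus_preserves_C0 colswap_preserves_C0 by (auto simp: Torus_det2 det2_colswap)
    then show "(g, \<sigma>) \<in> AutC0"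
      using g\<sigma> by (simp add: mem_AutC0_iff is_autC0_twist_iff)
  qed
  then show ?thesis
    by auto
qed

theorem proposition6p1:
  assumes "(2::'a::field) \<noteq> 0" and "(3::'a) \<noteq> 0"
  shows "(Stab_M :: (3 \<Rightarrow> 'a mat2) set)
           = Torus \<union> (\<lambda>g. \<lambda>k. mmult2 (g k) wmat) ` Torus
       \<and> (Stab_Mtilde :: ((3 \<Rightarrow> 'a mat2) \<times> (3 \<Rightarrow> 3)) set) = Stab_M \<times> S3
       \<and> (Stab_Mtilde :: ((3 \<Rightarrow> 'a mat2) \<times> (3 \<Rightarrow> 3)) set) = AutC0"
proof -
  have colswap_eq: "colswap = (\<lambda>g. \<lambda>k. mmult2 (g k) wmat)"
    by (simp add: fun_eq_iff colswap_def)
  show ?thesis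
    unfolding Stab_Mtilde_eq AutC0_eq Stab_M_eq colswap_eq by simp
qed

end
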